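(* Let $\kappa>0$, $a>0$ and $0\le\gamma<\pi/2$. Then there exists a $\kappa$-cylindrical surface over the strip $\Omega=\{(x,y): |x|<a\}$ making contact angle $\gamma$ with the vertical plates $\{x=\pm a\}$. Precisely: there exists $u_0>0$ such that the solution $u=u(r;u_0)$ of $\frac{d}{dr}\big(u'/\sqrt{1+u'^2}\big)=\kappa u$, $u(0)=u_0$, $u'(0)=0$, is defined on $[0,a)$ and $\sin\psi(r)\to\cos\gamma$ as $r\to a$, where $\sin\psi=u'/\sqrt{1+u'^2}$.
   Context: The surface is $z=u(x)$, $(x,y)\in\Omega$, with $u$ even; it solves $\operatorname{div}\big(Du/\sqrt{1+|Du|^2}\big)=\kappa u$ in $\Omega$ and the Young boundary condition $\nu\cdot Du/\sqrt{1+|Du|^2}=\cos\gamma$ on $\partial\Omega$ ($\nu$ the exterior unit normal). *)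

theory Defs
  imports "HOL-Analysis.Analysis"
begin

end

theory Submission
  imports Defs
begin

(* Parametrise the profile by its inclination angle \<psi>, sin \<psi> = u' / sqrt (1 + u'^2).
   The equation becomes du/d\<psi> = sin \<psi> / (\<kappa> u) and dr/d\<psi> = cos \<psi> / (\<kappa> u); the first
   integrates to u^2 = u0^2 + 2 (1 - cos \<psi>) / \<kappa>, so r(\<psi>) is an explicit integral, and
   inverting r(\<psi>) gives the solution.  The plates are met at inclination p = pi/2 - \<gamma>, i.e.
   at the width W(u0) = r(p).  W depends continuously on u0, is at most p / (\<kappa> u0), and is
   bounded below by a multiple of -ln u0 as u0 \<rightarrow> 0, so W(u0) = a for some u0 > 0. *)

lemma strict_mono_inverse_has_derivative:
  fixes f f' :: "real \<Rightarrow> real"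
  assumes "lo \<le> hi" and cont: "continuous_on {lo..hi} f"
    and deriv: "\<And>t. lo < t \<Longrightarrow> t < hi \<Longrightarrow> (f has_real_derivative f' t) (at t)"
    and pos: "\<And>t. lo < t \<Longrightarrow> t < hi \<Longrightarrow> 0 < f' t"
  obtains \<phi> where "\<And>s t. lo \<le> s \<Longrightarrow> s < t \<Longrightarrow> t \<le> hi \<Longrightarrow> f s < f t"
    and "\<And>t. t \<in> {lo..hi} \<Longrightarrow> \<phi> (f t) = t"
    and "\<And>y. y \<in> {f lo..f hi} \<Longrightarrow> \<phi> y \<in> {lo..hi} \<and> f (\<phi> y) = y"
    and "continuous_on {f lo..f hi} \<phi>"
    and "\<And>y. f lo < y \<Longrightarrow> y < f hi \<Longrightarrow> (\<phi> has_real_derivative inverse (f' (\<phi> y))) (at y)"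
proof
  show mono: "f s < f t" if "lo \<le> s" "s < t" "t \<le> hi" for s t
    using that pos deriv
    by (intro DERIV_pos_imp_increasing_open[OF \<open>s < t\<close>] continuous_on_subset[OF cont]) force+
  have img: "f ` {lo..hi} = {f lo..f hi}"
  proof
    show "f ` {lo..hi} \<subseteq> {f lo..f hi}"
      using mono by (force simp: order_le_less)
    show "{f lo..f hi} \<subseteq> f ` {lo..hi}"
      using IVT'[OF _ _ \<open>lo \<le> hi\<close> cont] by fastforce
  qed
  have inj: "inj_on f {lo..hi}"
    using mono by (intro inj_onI) (metis atLeastAtMost_iff linorder_cases less_irrefl)
  define \<phi> where "\<phi> = inv_into {lo..hi} f"
  show inv: "\<phi> (f t) = t" if "t \<in> {lo..hi}" for t
    unfolding \<phi>_def using inj that by (rule inv_into_f_f)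
  show right_inv: "\<phi> y \<in> {lo..hi} \<and> f (\<phi> y) = y" if "y \<in> {f lo..f hi}" for y
  proof -
    have "y \<in> f ` {lo..hi}" using that img by simp
    then show ?thesis unfolding \<phi>_def by (metis inv_into_into f_inv_into_f)
  qed
  show \<phi>_cont: "continuous_on {f lo..f hi} \<phi>"
    using continuous_on_inv[OF cont compact_Icc] inv img by auto
  show "(\<phi> has_real_derivative inverse (f' (\<phi> y))) (at y)" if "f lo < y" "y < f hi" for y
  proof (rule DERIV_inverse_function[where a="f lo" and b="f hi"])
    have "\<phi> y \<noteq> lo" "\<phi> y \<noteq> hi"
      using right_inv[of y] that by auto
    then have "lo < \<phi> y" "\<phi> y < hi"
      using right_inv[of y] that by auto
    then show "(f has_real_derivative f' (\<phi> y)) (at (\<phi> y))" "f' (\<phi> y) \<noteq> 0"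
      using deriv pos by (auto simp: less_imp_neq[symmetric])
    show "isCont \<phi> y"
      using that by (intro continuous_on_interior[OF \<phi>_cont]) auto
  qed (use that right_inv in auto)
qed

lemma inverse_of_primitive:
  fixes g :: "real \<Rightarrow> real"
  assumes "lo < 0" "0 < hi" and cont: "continuous_on {lo..hi} g"
    and pos: "\<And>t. lo < t \<Longrightarrow> t < hi \<Longrightarrow> 0 < g t"
  defines "A \<equiv> integral {0..hi} g"
  obtains \<psi> where "0 < A" and "\<psi> 0 = 0"
    and "\<And>r. 0 \<le> r \<Longrightarrow> r < A \<Longrightarrow> 0 \<le> \<psi> r \<and> \<psi> r < hi"
    and "\<And>r. 0 \<le> r \<Longrightarrow> r < A \<Longrightarrow> (\<psi> has_real_derivative inverse (g (\<psi> r))) (at r)"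
    and "(\<psi> \<longlongrightarrow> hi) (at_left A)"
proof -
  define R where "R t = integral {lo..t} g - integral {lo..0} g" for t
  have R_deriv: "(R has_real_derivative g t) (at t within {lo..hi})" if "t \<in> {lo..hi}" for t
    unfolding R_def[abs_def]
    using DERIV_diff[OF integral_has_real_derivative[OF cont that] DERIV_const] by simp
  have R_deriv_at: "(R has_real_derivative g t) (at t)" if "lo < t" "t < hi" for t
    using R_deriv[of t] that by (simp add: at_within_Icc_at)
  have R0: "R 0 = 0"
    unfolding R_def by simp
  have R_hi: "R hi = A"
    using Henstock_Kurzweil_Integration.integral_combine[of lo 0 hi g]
      integrable_continuous_interval[OF cont] \<open>lo < 0\<close> \<open>0 < hi\<close>
    unfolding R_def A_def by simp
  obtain \<phi> where mono: "\<And>s t. lo \<le> s \<Longrightarrow> s < t \<Longrightarrow> t \<le> hi \<Longrightarrow> R s < R t"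
    and left_inv: "\<And>t. t \<in> {lo..hi} \<Longrightarrow> \<phi> (R t) = t"
    and right_inv: "\<And>y. y \<in> {R lo..R hi} \<Longrightarrow> \<phi> y \<in> {lo..hi} \<and> R (\<phi> y) = y"
    and \<phi>_cont: "continuous_on {R lo..R hi} \<phi>"
    and \<phi>_deriv: "\<And>y. R lo < y \<Longrightarrow> y < R hi \<Longrightarrow> (\<phi> has_real_derivative inverse (g (\<phi> y))) (at y)"
  proof (rule strict_mono_inverse_has_derivative[of lo hi R g])
    show "continuous_on {lo..hi} R"
      using R_deriv by (rule DERIV_continuous_on)
  qed (use \<open>lo < 0\<close> \<open>0 < hi\<close> R_deriv_at pos in auto)
  have "R lo < R 0" "R 0 < R hi"
    using \<open>lo < 0\<close> \<open>0 < hi\<close> by (auto intro: mono)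
  then have "R lo < 0" "0 < A"
    unfolding R0 R_hi by auto
  show thesis
  proof
    show "0 < A" by fact
    show "\<phi> 0 = 0"
      using left_inv[of 0] R0 \<open>lo < 0\<close> \<open>0 < hi\<close> by simp
  next
    fix r assume r: "0 \<le> r" "r < A"
    then have r_range: "R lo < r" "r < R hi"
      using \<open>R lo < 0\<close> R_hi by auto
    then have \<phi>r: "\<phi> r \<in> {lo..hi}" "R (\<phi> r) = r"
      using right_inv[of r] by auto
    have "\<not> \<phi> r < 0"
    proof
      assume "\<phi> r < 0"
      then have "R (\<phi> r) < R 0"
        using \<phi>r(1) \<open>0 < hi\<close> by (intro mono) auto
      then show False
        using \<phi>r(2) R0 r(1) by simp
    qed
    moreover have "\<phi> r \<noteq> hi"
      using \<phi>r(2) r_range by auto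
    ultimately show "0 \<le> \<phi> r \<and> \<phi> r < hi"
      using \<phi>r(1) by auto
    show "(\<phi> has_real_derivative inverse (g (\<phi> r))) (at r)"
      using r_range by (rule \<phi>_deriv)
  next
    have "(\<phi> \<longlongrightarrow> \<phi> (R hi)) (at_left (R hi))"
      using continuous_on_Icc_at_leftD[OF \<phi>_cont] \<open>R lo < 0\<close> \<open>0 < A\<close> R_hi by simp
    moreover have "\<phi> (R hi) = hi"
      using left_inv[of hi] \<open>lo < 0\<close> \<open>0 < hi\<close> by simp
    ultimately show "(\<phi> \<longlongrightarrow> hi) (at_left A)"
      using R_hi by simp
  qed
qed

lemma tan_div_sqrt_one_plus_tan_squared:
  assumes "cos x > 0"
  shows "tan x / sqrt (1 + (tan x)\<^sup>2) = sin x"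
proof -
  have "1 + (tan x)\<^sup>2 = (1 / cos x)\<^sup>2"
    using assms unfolding tan_def by (simp add: field_simps power2_eq_square)
  then show ?thesis
    using assms unfolding tan_def by simp
qed

lemma one_minus_cos_le_half_square: "1 - cos x \<le> (x::real)\<^sup>2 / 2"
proof -
  have "(sin (x / 2))\<^sup>2 \<le> (x / 2)\<^sup>2"
    using abs_sin_x_le_abs_x[of "x / 2"] by (metis abs_ge_zero power2_abs power_mono)
  then show ?thesis
    using cos_double_sin[of "x / 2"] by (simp add: power_divide)
qed

(* The profile with u(0)^2 = c as a function of the inclination angle \<psi>;
   profile_dr is dr/d\<psi>. *)
definition profile_height :: "real \<Rightarrow> real \<Rightarrow> real \<Rightarrow> real" where
  "profile_height \<kappa> c \<psi> = sqrt (c + 2 * (1 - cos \<psi>) / \<kappa>)"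

definition profile_dr :: "real \<Rightarrow> real \<Rightarrow> real \<Rightarrow> real" where
  "profile_dr \<kappa> c \<psi> = cos \<psi> / (\<kappa> * profile_height \<kappa> c \<psi>)"

definition profile_width :: "real \<Rightarrow> real \<Rightarrow> real \<Rightarrow> real" where
  "profile_width \<kappa> c p = integral {0..p} (profile_dr \<kappa> c)"

lemma profile_height_squared:
  assumes "\<kappa> > 0" "c \<ge> 0"
  shows "(profile_height \<kappa> c \<psi>)\<^sup>2 = c + 2 * (1 - cos \<psi>) / \<kappa>"
  unfolding profile_height_def using assms by simp

lemma profile_height_ge:
  assumes "\<kappa> > 0"
  shows "sqrt c \<le> profile_height \<kappa> c \<psi>"
  unfolding profile_height_def using assms by simp

lemma profile_height_pos:
  assumes "\<kappa> > 0" "c > 0"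
  shows "0 < profile_height \<kappa> c \<psi>"
  using profile_height_ge[OF assms(1), of c \<psi>] assms(2) by (meson less_le_trans real_sqrt_gt_zero)

lemma has_real_derivative_profile_height:
  assumes "\<kappa> > 0" "c > 0"
  shows "(profile_height \<kappa> c has_real_derivative sin \<psi> / (\<kappa> * profile_height \<kappa> c \<psi>)) (at \<psi>)"
proof -
  have "0 < c + 2 * (1 - cos \<psi>) / \<kappa>"
    using profile_height_pos[OF assms] by (simp add: profile_height_def)
  then show ?thesis
    unfolding profile_height_def[abs_def] using assms
    by (auto intro!: derivative_eq_intros simp: field_simps)
qed

lemma continuous_on_profile_dr_param:
  assumes "\<kappa> > 0"
  shows "continuous_on ({0<..} \<times> UNIV) (\<lambda>(c, \<psi>). profile_dr \<kappa> c \<psi>)"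
proof -
  have "\<kappa> * profile_height \<kappa> c \<psi> \<noteq> 0" if "c > 0" for c \<psi>
    using profile_height_pos[OF assms that, of \<psi>] assms by simp
  then show ?thesis
    unfolding profile_dr_def profile_height_def split_beta
    by (intro continuous_intros) auto
qed

lemma continuous_on_profile_dr:
  assumes "\<kappa> > 0" "c > 0"
  shows "continuous_on S (profile_dr \<kappa> c)"
proof -
  have "continuous_on S (\<lambda>\<psi>. (c, \<psi>))"
    by (intro continuous_intros)
  then show ?thesis
    using continuous_on_compose2[OF continuous_on_profile_dr_param[OF assms(1)]] assms(2)
    by fastforce
qed

lemma profile_dr_pos:
  assumes "\<kappa> > 0" "c > 0" "\<bar>\<psi>\<bar> < pi / 2"
  shows "0 < profile_dr \<kappa> c \<psi>"
  unfolding profile_dr_def using profile_height_pos[OF assms(1,2)] assms cos_gt_zero_pi[of \<psi>]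
  by simp

lemma profile_height_le:
  assumes "\<kappa> > 0" "c \<ge> 0" "s \<ge> 0"
  shows "profile_height \<kappa> c s \<le> sqrt c + s / sqrt \<kappa>"
proof (rule power2_le_imp_le)
  have "(profile_height \<kappa> c s)\<^sup>2 \<le> c + s\<^sup>2 / \<kappa>"
    using profile_height_squared[OF assms(1,2)] one_minus_cos_le_half_square[of s] assms(1)
    by (simp add: divide_right_mono)
  also have "\<dots> \<le> (sqrt c + s / sqrt \<kappa>)\<^sup>2"
    using assms by (simp add: power2_sum power_divide)
  finally show "(profile_height \<kappa> c s)\<^sup>2 \<le> (sqrt c + s / sqrt \<kappa>)\<^sup>2" .
  show "0 \<le> sqrt c + s / sqrt \<kappa>"
    using assms by simp
qed

lemma profile_chain_rules:
  assumes "\<kappa> > 0" "c > 0" "cos (\<psi> r) > 0"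
    and \<psi>_deriv: "(\<psi> has_real_derivative inverse (profile_dr \<kappa> c (\<psi> r))) (at r)"
  shows "((\<lambda>s. profile_height \<kappa> c (\<psi> s)) has_real_derivative tan (\<psi> r)) (at r)"
    and "((\<lambda>s. sin (\<psi> s)) has_real_derivative \<kappa> * profile_height \<kappa> c (\<psi> r)) (at r)"
proof -
  let ?h = "profile_height \<kappa> c (\<psi> r)"
  have "0 < ?h"
    using profile_height_pos assms by blast
  have \<psi>': "inverse (profile_dr \<kappa> c (\<psi> r)) = \<kappa> * ?h / cos (\<psi> r)"
    unfolding profile_dr_def by simp
  have "((\<lambda>s. profile_height \<kappa> c (\<psi> s)) has_real_derivative
      sin (\<psi> r) / (\<kappa> * ?h) * inverse (profile_dr \<kappa> c (\<psi> r))) (at r)"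
    by (rule DERIV_chain2[OF has_real_derivative_profile_height[OF assms(1,2)] \<psi>_deriv])
  then show "((\<lambda>s. profile_height \<kappa> c (\<psi> s)) has_real_derivative tan (\<psi> r)) (at r)"
    unfolding \<psi>' tan_def using assms \<open>0 < ?h\<close> by (simp add: field_simps)
  have "((\<lambda>s. sin (\<psi> s)) has_real_derivative cos (\<psi> r) * inverse (profile_dr \<kappa> c (\<psi> r))) (at r)"
    by (rule DERIV_chain2[OF DERIV_sin \<psi>_deriv])
  then show "((\<lambda>s. sin (\<psi> s)) has_real_derivative \<kappa> * ?h) (at r)"
    unfolding \<psi>' using assms by simp
qed

lemma profile_solution:
  assumes "\<kappa> > 0" "c > 0" "0 < p" "p \<le> pi / 2"
  defines "A \<equiv> profile_width \<kappa> c p"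
  shows "\<exists>u du :: real \<Rightarrow> real.
           u 0 = sqrt c \<and> du 0 = 0 \<and>
           (\<forall>r \<in> {0..<A}.
              (u has_real_derivative du r) (at r within {0..<A}) \<and>
              ((\<lambda>s. du s / sqrt (1 + (du s)\<^sup>2)) has_real_derivative \<kappa> * u r)
                 (at r within {0..<A})) \<and>
           ((\<lambda>r. du r / sqrt (1 + (du r)\<^sup>2)) \<longlongrightarrow> sin p) (at_left A)"
proof -
  obtain \<psi> where "0 < A" and \<psi>0: "\<psi> 0 = 0"
    and \<psi>_range: "\<And>r. 0 \<le> r \<Longrightarrow> r < A \<Longrightarrow> 0 \<le> \<psi> r \<and> \<psi> r < p"
    and \<psi>_deriv: "\<And>r. 0 \<le> r \<Longrightarrow> r < A \<Longrightarrow>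
                   (\<psi> has_real_derivative inverse (profile_dr \<kappa> c (\<psi> r))) (at r)"
    and \<psi>_lim: "(\<psi> \<longlongrightarrow> p) (at_left A)"
  proof (rule inverse_of_primitive[of "-p" p "profile_dr \<kappa> c", folded profile_width_def A_def])
    show "continuous_on {-p..p} (profile_dr \<kappa> c)"
      using assms by (intro continuous_on_profile_dr)
    show "0 < profile_dr \<kappa> c t" if "-p < t" "t < p" for t
      using that assms by (intro profile_dr_pos) auto
  qed (use assms in auto)
  define u where "u r = profile_height \<kappa> c (\<psi> r)" for r
  define du where "du r = tan (\<psi> r)" for r
  have cos_pos: "0 < cos (\<psi> r)" if "r \<in> {0..<A}" for r
    using \<psi>_range[of r] that assms by (intro cos_gt_zero_pi) auto
  have sin_eq: "du r / sqrt (1 + (du r)\<^sup>2) = sin (\<psi> r)" if "r \<in> {0..<A}" for r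
    unfolding du_def using cos_pos[OF that] by (rule tan_div_sqrt_one_plus_tan_squared)
  have ode: "\<forall>r \<in> {0..<A}. (u has_real_derivative du r) (at r within {0..<A}) \<and>
      ((\<lambda>s. du s / sqrt (1 + (du s)\<^sup>2)) has_real_derivative \<kappa> * u r) (at r within {0..<A})"
  proof (intro ballI conjI)
    fix r assume r: "r \<in> {0..<A}"
    note chain = profile_chain_rules[OF assms(1,2) cos_pos[OF r] \<psi>_deriv]
    show "(u has_real_derivative du r) (at r within {0..<A})"
      unfolding u_def du_def using chain(1) r by (auto intro: has_field_derivative_at_within)
    have "((\<lambda>s. sin (\<psi> s)) has_real_derivative \<kappa> * u r) (at r within {0..<A})"
      unfolding u_def using chain(2) r by (auto intro: has_field_derivative_at_within)
    then show "((\<lambda>s. du s / sqrt (1 + (du s)\<^sup>2)) has_real_derivative \<kappa> * u r)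
        (at r within {0..<A})"
      by (rule has_field_derivative_transform_within[where d=1]) (use r sin_eq in auto)
  qed
  have "((\<lambda>r. sin (\<psi> r)) \<longlongrightarrow> sin p) (at_left A)"
    using \<psi>_lim by (rule tendsto_sin)
  moreover have "\<forall>\<^sub>F r in at_left A. sin (\<psi> r) = du r / sqrt (1 + (du r)\<^sup>2)"
    using sin_eq \<open>0 < A\<close> by (intro eventually_at_leftI[of 0]) auto
  ultimately have "((\<lambda>r. du r / sqrt (1 + (du r)\<^sup>2)) \<longlongrightarrow> sin p) (at_left A)"
    by (rule Lim_transform_eventually)
  moreover have "u 0 = sqrt c" "du 0 = 0"
    unfolding u_def du_def \<psi>0 profile_height_def by simp_all
  ultimately show ?thesis
    using ode by (intro exI[of _ u] exI[of _ du] conjI) auto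
qed

lemma continuous_on_profile_width:
  assumes "\<kappa> > 0"
  shows "continuous_on {0<..} (\<lambda>c. profile_width \<kappa> c p)"
proof -
  have "continuous_on ({0<..} \<times> cbox 0 p) (\<lambda>(c, \<psi>). profile_dr \<kappa> c \<psi>)"
    by (rule continuous_on_subset[OF continuous_on_profile_dr_param[OF assms]]) auto
  then show ?thesis
    unfolding profile_width_def cbox_interval[symmetric] by (rule integral_continuous_on_param)
qed

lemma profile_width_le:
  assumes "\<kappa> > 0" "c > 0" "0 \<le> p"
  shows "profile_width \<kappa> c p \<le> p / (\<kappa> * sqrt c)"
proof -
  have "profile_dr \<kappa> c s \<le> 1 / (\<kappa> * sqrt c)" for s
  proof -
    have "\<kappa> * sqrt c \<le> \<kappa> * profile_height \<kappa> c s" "0 < \<kappa> * sqrt c"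
      using profile_height_ge[OF assms(1)] assms by auto
    then have "cos s / (\<kappa> * profile_height \<kappa> c s) \<le> 1 / (\<kappa> * profile_height \<kappa> c s)"
      "1 / (\<kappa> * profile_height \<kappa> c s) \<le> 1 / (\<kappa> * sqrt c)"
      by (auto intro!: divide_right_mono divide_left_mono)
    then show ?thesis
      unfolding profile_dr_def by linarith
  qed
  then have "profile_width \<kappa> c p \<le> integral {0..p} (\<lambda>_. 1 / (\<kappa> * sqrt c))"
    unfolding profile_width_def using assms
    by (intro integral_le integrable_continuous_interval continuous_on_profile_dr continuous_intros)
  then show ?thesis
    using assms by simp
qed

lemma profile_width_le_of_large_apex:
  assumes "\<kappa> > 0" "a > 0" "0 \<le> p" "c > 0" "(p / (\<kappa> * a))\<^sup>2 \<le> c"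
  shows "profile_width \<kappa> c p \<le> a"
proof -
  have "p / (\<kappa> * a) \<le> sqrt c"
    using assms by (intro real_le_rsqrt) auto
  then have "p / (\<kappa> * sqrt c) \<le> a"
    using assms by (simp add: field_simps)
  then show ?thesis
    using profile_width_le[of \<kappa> c p] assms by linarith
qed

lemma profile_dr_ge:
  assumes "\<kappa> > 0" "c > 0" "0 \<le> s" "s \<le> pi / 3"
  shows "1 / (2 * sqrt \<kappa> * (sqrt (\<kappa> * c) + s)) \<le> profile_dr \<kappa> c s"
proof -
  let ?e = "sqrt (\<kappa> * c)"
  have "cos (pi / 3) \<le> cos s"
    using assms by (intro cos_monotone_0_pi_le) auto
  then have cos_ge: "1 / 2 \<le> cos s"
    by (simp add: cos_60)
  have "\<kappa> * profile_height \<kappa> c s \<le> \<kappa> * (sqrt c + s / sqrt \<kappa>)"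
    using profile_height_le[of \<kappa> c s] assms by simp
  also have "\<dots> = sqrt \<kappa> * (?e + s)"
  proof -
    have "\<kappa> * (s / sqrt \<kappa>) = s * (\<kappa> / sqrt \<kappa>)"
      by simp
    also have "\<dots> = sqrt \<kappa> * s"
      using assms by (simp add: real_div_sqrt)
    finally show ?thesis
      using assms by (simp add: real_sqrt_mult distrib_left)
  qed
  finally have "\<kappa> * profile_height \<kappa> c s \<le> sqrt \<kappa> * (?e + s)" .
  moreover have "0 < \<kappa> * profile_height \<kappa> c s"
    using profile_height_pos assms by simp
  ultimately have "(1 / 2) / (sqrt \<kappa> * (?e + s)) \<le> (1 / 2) / (\<kappa> * profile_height \<kappa> c s)"
    by (simp add: frac_le)
  also have "\<dots> \<le> profile_dr \<kappa> c s"
    unfolding profile_dr_def using cos_ge \<open>0 < \<kappa> * profile_height \<kappa> c s\<close>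
    by (intro divide_right_mono) auto
  finally show ?thesis
    by simp
qed

lemma profile_width_ge_ln:
  assumes "\<kappa> > 0" "c > 0" "0 < b" "b \<le> p" "b \<le> pi / 3" "p \<le> pi / 2"
  shows "ln (1 + b / sqrt (\<kappa> * c)) / (2 * sqrt \<kappa>) \<le> profile_width \<kappa> c p"
proof -
  define e where "e = sqrt (\<kappa> * c)"
  have "e > 0"
    unfolding e_def using assms by simp
  define h where "h s = 1 / (2 * sqrt \<kappa> * (e + s))" for s
  have "(h has_integral ln (1 + b / e) / (2 * sqrt \<kappa>) - ln (1 + 0 / e) / (2 * sqrt \<kappa>)) {0..b}"
  proof (rule fundamental_theorem_of_calculus)
    fix x assume "x \<in> {0..b}"
    then have "((\<lambda>s. ln (1 + s / e)) has_real_derivative 1 / (e + x)) (at x)"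
      using \<open>e > 0\<close> by (auto intro!: derivative_eq_intros simp: field_simps add_pos_nonneg)
    then have "((\<lambda>s. ln (1 + s / e) / (2 * sqrt \<kappa>)) has_real_derivative
        1 / (e + x) / (2 * sqrt \<kappa>)) (at x)"
      by (rule DERIV_cdivide)
    then show "((\<lambda>s. ln (1 + s / e) / (2 * sqrt \<kappa>)) has_vector_derivative h x) (at x within {0..b})"
      unfolding h_def
      by (simp add: mult.commute has_real_derivative_iff_has_vector_derivative
          has_vector_derivative_at_within)
  qed (use assms in simp)
  then have h_integral: "(h has_integral ln (1 + b / e) / (2 * sqrt \<kappa>)) {0..b}"
    by simp
  have h_le: "h s \<le> profile_dr \<kappa> c s" if "s \<in> {0..b}" for s
    unfolding h_def e_def using that assms by (intro profile_dr_ge) auto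
  have integrable: "profile_dr \<kappa> c integrable_on {x..y}" for x y
    using assms by (intro integrable_continuous_interval continuous_on_profile_dr)
  have nonneg: "0 \<le> profile_dr \<kappa> c s" if "s \<in> {0..p}" for s
  proof -
    have "0 \<le> cos s"
      using that assms by (intro cos_ge_zero) auto
    then show ?thesis
      unfolding profile_dr_def using assms profile_height_pos[of \<kappa> c s] by simp
  qed
  have "ln (1 + b / e) / (2 * sqrt \<kappa>) \<le> integral {0..b} (profile_dr \<kappa> c)"
    by (rule has_integral_le[OF h_integral integrable_integral[OF integrable] h_le])
  also have "\<dots> \<le> profile_width \<kappa> c p"
    unfolding profile_width_def using assms
    by (intro integral_subset_le integrable ballI nonneg) auto
  finally show ?thesis
    unfolding e_def .
qed

lemma profile_width_unbounded:
  assumes "\<kappa> > 0" "0 < p" "p \<le> pi / 2"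
  obtains c where "c > 0" "a \<le> profile_width \<kappa> c p"
proof
  define b where "b = min p (pi / 3)"
  define c where "c = (b / exp (2 * sqrt \<kappa> * a))\<^sup>2 / \<kappa>"
  have "0 < b" "b \<le> p" "b \<le> pi / 3"
    unfolding b_def using assms by auto
  then show "c > 0"
    unfolding c_def using assms by simp
  have "b / sqrt (\<kappa> * c) = exp (2 * sqrt \<kappa> * a)"
    unfolding c_def using \<open>0 < b\<close> assms by (simp add: real_sqrt_divide)
  moreover have "2 * sqrt \<kappa> * a \<le> ln (1 + exp (2 * sqrt \<kappa> * a))"
    by (subst ln_ge_iff) (auto intro: add_pos_pos)
  ultimately have "2 * sqrt \<kappa> * a \<le> ln (1 + b / sqrt (\<kappa> * c))"
    by simp
  then have "a \<le> ln (1 + b / sqrt (\<kappa> * c)) / (2 * sqrt \<kappa>)"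
    using assms by (simp add: field_simps)
  also have "\<dots> \<le> profile_width \<kappa> c p"
    using \<open>c > 0\<close> \<open>0 < b\<close> \<open>b \<le> p\<close> \<open>b \<le> pi / 3\<close> assms by (intro profile_width_ge_ln) auto
  finally show "a \<le> profile_width \<kappa> c p" .
qed

theorem mainTheorem8:
  fixes \<kappa> a \<gamma> :: real
  assumes "\<kappa> > 0" and "a > 0" and "0 \<le> \<gamma>" and "\<gamma> < pi / 2"
  shows "\<exists>u0 > 0. \<exists>u du :: real \<Rightarrow> real.
           u 0 = u0 \<and> du 0 = 0 \<and>
           (\<forall>r \<in> {0..<a}.
              (u has_real_derivative du r) (at r within {0..<a}) \<and>
              ((\<lambda>s. du s / sqrt (1 + (du s)\<^sup>2)) has_real_derivative \<kappa> * u r)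
                 (at r within {0..<a})) \<and>
           ((\<lambda>r. du r / sqrt (1 + (du r)\<^sup>2)) \<longlongrightarrow> cos \<gamma>) (at_left a)"
proof -
  define p where "p = pi / 2 - \<gamma>"
  have p: "0 < p" "p \<le> pi / 2" "sin p = cos \<gamma>"
    unfolding p_def using assms by (auto simp: sin_diff)
  obtain c1 where c1: "c1 > 0" "a \<le> profile_width \<kappa> c1 p"
    using profile_width_unbounded[OF \<open>\<kappa> > 0\<close> p(1,2)] by blast
  define c2 where "c2 = c1 + (p / (\<kappa> * a))\<^sup>2"
  have "c1 \<le> c2" "c2 > 0"
    unfolding c2_def using c1 by (auto intro: add_pos_nonneg)
  moreover have "profile_width \<kappa> c2 p \<le> a"
    using \<open>c2 > 0\<close> c1 assms p unfolding c2_def by (intro profile_width_le_of_large_apex) auto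
  moreover have "continuous_on {c1..c2} (\<lambda>c. profile_width \<kappa> c p)"
    using c1 by (intro continuous_on_subset[OF continuous_on_profile_width[OF \<open>\<kappa> > 0\<close>]]) auto
  ultimately obtain c where c: "c1 \<le> c" "profile_width \<kappa> c p = a"
    using IVT2'[of "\<lambda>c. profile_width \<kappa> c p" c2 a c1] c1 by auto
  then have "c > 0"
    using c1 by linarith
  moreover note profile_solution[OF \<open>\<kappa> > 0\<close> this p(1,2)]
  ultimately show ?thesis
    unfolding p(3) c(2) by (intro exI[of _ "sqrt c"]) simp
qed

end
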